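(* Let $d>d_*=\frac{\sqrt[4]{27}}{4}$ and let $\kappa$ be a positive, non-constant solution, defined on its maximal interval, of the equation $$\kappa^{3/4}\frac{d^2}{ds^2}\Big(\frac{1}{\kappa^{3/4}}\Big)-3\kappa^2+1=0$$ satisfying the first integral $$\kappa_s^2=\tfrac{16}{9}\kappa^2\big(16\,d\,\kappa^{3/2}-9\kappa^2-1\big).$$ Then $\kappa$ is defined on all of $\mathbb R$ and is periodic.
   Context: This equation is the Euler–Lagrange equation (with $c=1$) of the functional $\Theta(\gamma)=\int_\gamma\kappa^{1/4}\,ds$ on curves in $\mathbb S^2$, where $s$ is arc length and $\kappa$ the geodesic curvature; it governs the curvature of the profile curve of a rotational biconservative surface in $\mathbb S^3$ with nowhere-vanishing gradient of the mean curvature. *)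

theory Defs
  imports "HOL-Analysis.Analysis"
begin

definition d_star :: real where
  "d_star = root 4 27 / 4"

definition biconservative_sol :: "real set \<Rightarrow> (real \<Rightarrow> real) \<Rightarrow> bool" where
  "biconservative_sol J k \<longleftrightarrow>
     open J \<and> is_interval J \<and> J \<noteq> {} \<and>
     (\<forall>s\<in>J. k s > 0 \<and> k differentiable (at s) \<and> deriv k differentiable (at s) \<and>
        k s powr (3/4) * deriv (deriv (\<lambda>t. 1 / k t powr (3/4))) s - 3 * (k s)\<^sup>2 + 1 = 0)"

definition maximal_sol :: "real set \<Rightarrow> (real \<Rightarrow> real) \<Rightarrow> bool" where
  "maximal_sol I k \<longleftrightarrow> biconservative_sol I k \<and>
     (\<forall>J g. I \<subseteq> J \<and> biconservative_sol J g \<and> (\<forall>s\<in>I. g s = k s) \<longrightarrow> J = I)"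

end

theory Submission
  imports Defs
begin

text \<open>Write y = sqrt k. The first integral reads k_s^2 = 16/9 y^4 q(y) with the quartic
  q(y) = 16 d y^3 - 9 y^4 - 1, which for d > d_* has two positive roots y1 < 4d/3 < y2 and is
  positive exactly between them, so y stays in [y1, y2]. Factoring q(y) = (y - y1) (y2 - y) R(y)
  with R > 0 on [y1, y2], the substitution y = (y1 + y2)/2 - (y2 - y1)/2 cos \<theta> turns the first
  integral into \<theta>_s = 2/3 y sqrt (R y): an autonomous equation with positive, 2 pi-periodic
  right-hand side. Its solutions live on all of R and gain 2 pi in a fixed time T, which yields a
  T-periodic solution through every admissible initial value. Given the first integral, the
  equation is k'' = F(k) with F Lipschitz on [y1^2, y2^2], so by uniqueness every solution is one
  of these, and maximality forces its interval to be R.\<close>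

section \<open>Autonomous equations\<close>

lemma nonpos_if_deriv_le_mult:
  fixes w w' :: "real \<Rightarrow> real"
  assumes "a \<le> t" and "w a = 0"
    and "\<And>x. a \<le> x \<Longrightarrow> x \<le> t \<Longrightarrow> (w has_real_derivative w' x) (at x)"
    and "\<And>x. a \<le> x \<Longrightarrow> x \<le> t \<Longrightarrow> w' x \<le> C * w x"
  shows "w t \<le> 0"
proof -
  have "exp (- C * t) * w t \<le> exp (- C * a) * w a"
  proof (rule DERIV_nonpos_imp_nonincreasing[OF \<open>a \<le> t\<close>])
    fix x assume x: "a \<le> x" "x \<le> t"
    have "((\<lambda>x. exp (- C * x) * w x) has_real_derivative
        exp (- C * x) * (w' x - C * w x)) (at x)"
      by (rule derivative_eq_intros assms(3)[OF x] refl | simp add: algebra_simps)+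
    moreover have "exp (- C * x) * (w' x - C * w x) \<le> 0"
      using assms(4)[OF x] by (simp add: mult_nonneg_nonpos)
    ultimately show "\<exists>y. ((\<lambda>x. exp (- C * x) * w x) has_real_derivative y) (at x) \<and> y \<le> 0"
      by blast
  qed
  then show ?thesis using \<open>w a = 0\<close> by (simp add: mult_le_0_iff)
qed

text \<open>Gronwall's argument, applied to (x - y)^2 + (x' - y')^2 in both directions of time.\<close>
lemma autonomous_second_order_ode_unique:
  fixes x x' y y' F :: "real \<Rightarrow> real"
  assumes S: "is_interval S" "a \<in> S" "t \<in> S"
    and x: "\<And>s. s \<in> S \<Longrightarrow> (x has_real_derivative x' s) (at s)"
      "\<And>s. s \<in> S \<Longrightarrow> (x' has_real_derivative F (x s)) (at s)"
    and y: "\<And>s. s \<in> S \<Longrightarrow> (y has_real_derivative y' s) (at s)"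
      "\<And>s. s \<in> S \<Longrightarrow> (y' has_real_derivative F (y s)) (at s)"
    and F: "L-lipschitz_on V F" and V: "x ` S \<subseteq> V" "y ` S \<subseteq> V"
    and init: "x a = y a" "x' a = y' a"
  shows "x t = y t"
proof -
  define w where "w s = (x s - y s)\<^sup>2 + (x' s - y' s)\<^sup>2" for s
  define w' where "w' s = 2 * (x s - y s) * (x' s - y' s) + 2 * (x' s - y' s) * (F (x s) - F (y s))"
    for s
  define C where "C = 1 + L"
  have dw: "(w has_real_derivative w' s) (at s)" if "s \<in> S" for s
    unfolding w_def w'_def
    by (rule derivative_eq_intros x y that refl | simp add: algebra_simps)+
  have bound: "\<bar>w' s\<bar> \<le> C * w s" if "s \<in> S" for s
  proof -
    define e f where "e = x s - y s" and "f = x' s - y' s"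
    have "\<bar>F (x s) - F (y s)\<bar> \<le> L * \<bar>e\<bar>"
      using lipschitz_onD[OF F] V that unfolding e_def dist_real_def by blast
    then have "\<bar>2 * f * (F (x s) - F (y s))\<bar> \<le> 2 * \<bar>f\<bar> * (L * \<bar>e\<bar>)"
      by (simp add: abs_mult mult_left_mono)
    also have "\<dots> = L * (2 * \<bar>f\<bar> * \<bar>e\<bar>)"
      by simp
    also have "\<dots> \<le> L * (e\<^sup>2 + f\<^sup>2)"
      using lipschitz_on_nonneg[OF F] sum_squares_bound[of "\<bar>f\<bar>" "\<bar>e\<bar>"]
      by (intro mult_left_mono) (simp_all add: power2_eq_square)
    finally have "\<bar>w' s\<bar> \<le> \<bar>2 * e * f\<bar> + L * (e\<^sup>2 + f\<^sup>2)"
      unfolding w'_def e_def f_def by linarith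
    moreover have "\<bar>2 * e * f\<bar> \<le> e\<^sup>2 + f\<^sup>2"
      using sum_squares_bound[of "\<bar>e\<bar>" "\<bar>f\<bar>"] by (simp add: abs_mult power2_eq_square)
    ultimately show ?thesis unfolding C_def w_def e_def f_def by (simp add: algebra_simps)
  qed
  have seg: "s \<in> S" if "min a t \<le> s" "s \<le> max a t" for s
    using S that unfolding is_interval_1 by (metis max_def min_def)
  have "w t \<le> 0"
  proof (cases "a \<le> t")
    case True
    show ?thesis
      by (rule nonpos_if_deriv_le_mult[OF True, of w w' C])
        (use init seg True dw bound in \<open>auto simp: w_def abs_le_iff\<close>)
  next
    case False
    have "w (- (- t)) \<le> 0"
    proof (rule nonpos_if_deriv_le_mult[of "- a" "- t" "\<lambda>s. w (- s)" "\<lambda>s. - w' (- s)" C])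
      fix s assume "- a \<le> s" "s \<le> - t"
      then have "- s \<in> S" using seg False by auto
      then show "((\<lambda>s. w (- s)) has_real_derivative - w' (- s)) (at s)"
        and "- w' (- s) \<le> C * w (- s)"
        using dw[of "- s"] bound[of "- s"] DERIV_mirror[where f=w and x=s and y="w' (- s)"]
        by (auto simp: abs_le_iff)
    qed (use init False in \<open>auto simp: w_def\<close>)
    then show ?thesis by simp
  qed
  then show ?thesis unfolding w_def
    by (simp add: sum_power2_le_zero_iff)
qed

lemma lipschitz_on_interval_if_continuous_derivative:
  fixes f f' :: "real \<Rightarrow> real"
  assumes "\<And>x. x \<in> {a..b} \<Longrightarrow> (f has_real_derivative f' x) (at x)"
    and "continuous_on {a..b} f'"
  obtains L where "L-lipschitz_on {a..b} f"
proof -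
  obtain B where B: "\<And>x. x \<in> {a..b} \<Longrightarrow> \<bar>f' x\<bar> \<le> B"
    using compact_imp_bounded[OF compact_continuous_image[OF assms(2) compact_Icc]]
    unfolding bounded_real by blast
  have "(max 0 B)-lipschitz_on {a..b} f"
  proof (rule bounded_derivative_imp_lipschitz)
    fix x assume "x \<in> {a..b}"
    then show "(f has_derivative (\<lambda>h. f' x * h)) (at x within {a..b})"
      using assms(1) by (auto intro: has_derivative_at_withinI
          simp: has_field_derivative_def mult_commute_abs)
    show "onorm (\<lambda>h. f' x * h) \<le> max 0 B"
      using B[OF \<open>x \<in> {a..b}\<close>] by (intro onorm_le) (auto simp: abs_mult intro: mult_right_mono)
  qed auto
  then show ?thesis by (rule that)
qed

lemma has_real_derivative_inv:
  fixes F :: "real \<Rightarrow> real"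
  assumes F: "bij F" "\<And>x. (F has_real_derivative D x) (at x)" and D: "D (inv F t) \<noteq> 0"
  shows "(inv F has_real_derivative inverse (D (inv F t))) (at t)"
proof (rule DERIV_inverse_function[where a="t - 1" and b="t + 1"])
  have F_inv: "F (inv F y) = y" for y
    using F(1) by (simp add: bij_is_surj surj_f_inv_f)
  have "isCont (inv F) (F (inv F t))"
  proof (rule isCont_inverse_function[of 1 "inv F t" "inv F" F])
    show "inv F (F z) = z" if "\<bar>z - inv F t\<bar> \<le> 1" for z using F(1) by (simp add: bij_is_inj)
    show "isCont F z" if "\<bar>z - inv F t\<bar> \<le> 1" for z using F(2) by (rule DERIV_isCont)
  qed simp
  then show "isCont (inv F) t" by (simp only: F_inv)
  show "F (inv F y) = y" for y by (rule F_inv)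
qed (use D F in auto)

lemma surj_if_continuous_add_shift:
  fixes F :: "real \<Rightarrow> real"
  assumes cont: "continuous_on UNIV F" and shift: "\<And>x. F (x + p) = F x + T" and "0 < T"
  shows "surj F"
proof -
  have shift_n: "F (x + real n * p) = F x + real n * T" for x n
  proof (induction n)
    case (Suc n)
    have "F (x + real (Suc n) * p) = F ((x + real n * p) + p)" by (simp add: algebra_simps)
    also have "\<dots> = F x + real (Suc n) * T"
      by (simp only: shift Suc.IH) (simp add: algebra_simps)
    finally show ?case .
  qed simp
  have "is_interval (range F)"
    using cont by (simp add: is_interval_connected_1 connected_continuous_image)
  moreover have "y \<in> range F" if "is_interval (range F)" for y
  proof -
    obtain n where n: "\<bar>y - F 0\<bar> < real n * T"
      using ex_less_of_nat_mult[OF \<open>0 < T\<close>] by blast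
    have "F (- real n * p) = F 0 - real n * T" "F (real n * p) = F 0 + real n * T"
      using shift_n[of "- real n * p" n] shift_n[of 0 n] by simp_all
    with n that show ?thesis
      unfolding is_interval_1 by (smt (verit) rangeI)
  qed
  ultimately show ?thesis by blast
qed

lemma periodic_autonomous_ode_flow:
  fixes \<omega> :: "real \<Rightarrow> real"
  assumes cont: "continuous_on UNIV \<omega>" and pos: "\<And>x. 0 < \<omega> x"
    and per: "\<And>x. \<omega> (x + p) = \<omega> x" and "0 < p"
  obtains \<theta> T where "0 < T" "\<theta> t0 = x0"
    "\<And>t. (\<theta> has_real_derivative \<omega> (\<theta> t)) (at t)" "\<And>t. \<theta> (t + T) = \<theta> t + p"
proof -
  have "isCont (\<lambda>x. inverse (\<omega> x)) x" for x
    using cont pos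
    by (intro continuous_intros) (auto simp: continuous_on_eq_continuous_at less_imp_neq[symmetric])
  then obtain G where "\<forall>x::real. (-\<infinity>::ereal) < x \<longrightarrow> x < \<infinity> \<longrightarrow>
      (G has_vector_derivative inverse (\<omega> x)) (at x)"
    using einterval_antiderivative[of "-\<infinity>" "\<infinity>" "\<lambda>x. inverse (\<omega> x)"] by auto
  then have dG: "(G has_real_derivative inverse (\<omega> x)) (at x)" for x
    by (simp add: has_real_derivative_iff_has_vector_derivative)
  define F where "F x = G x - G x0 + t0" for x
  have dF: "(F has_real_derivative inverse (\<omega> x)) (at x)" for x
    unfolding F_def by (rule derivative_eq_intros dG refl | simp)+
  have mono: "strict_mono F"
  proof (rule strict_monoI)
    show "F x < F y" if "x < y" for x y
      by (rule DERIV_pos_imp_increasing[OF that]) (meson dF pos positive_imp_inverse_positive)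
  qed
  define T where "T = F p - F 0"
  have shift: "F (x + p) = F x + T" for x
  proof -
    have "((\<lambda>x. F (x + p)) has_real_derivative inverse (\<omega> x)) (at x)" for x
      using DERIV_chain2[OF dF DERIV_add[OF DERIV_ident DERIV_const[of p]], of x] by (simp add: per)
    then have "((\<lambda>x. F (x + p) - F x) has_real_derivative 0) (at x)" for x
      using DERIV_diff[OF _ dF] by fastforce
    from DERIV_isconst_all[OF allI[OF this], of x 0] show ?thesis unfolding T_def by simp
  qed
  have "0 < T" using mono \<open>0 < p\<close> unfolding T_def strict_mono_def by simp
  have "bij F"
  proof (rule bij_betw_imageI)
    show "inj_on F UNIV" using mono by (rule strict_mono_imp_inj_on)
    show "range F = UNIV"
    proof (rule surj_if_continuous_add_shift[of F p T, OF _ shift \<open>0 < T\<close>])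
      show "continuous_on UNIV F"
        using dF by (meson DERIV_isCont continuous_at_imp_continuous_on)
    qed
  qed
  show ?thesis
  proof
    show "0 < T" by fact
    show "inv F t0 = x0"
      using inv_f_f[OF bij_is_inj[OF \<open>bij F\<close>], of x0] by (simp add: F_def)
    show "(inv F has_real_derivative \<omega> (inv F t)) (at t)" for t
      using has_real_derivative_inv[OF \<open>bij F\<close> dF, of t] pos by (simp add: less_imp_neq[symmetric])
    show "inv F (t + T) = inv F t + p" for t
      using shift[of "inv F t"] \<open>bij F\<close> by (metis bij_inv_eq_iff)
  qed
qed

section \<open>The equation and its first integral\<close>

lemma powr_mult_deriv_deriv_inverse_powr:
  fixes k k' :: "real \<Rightarrow> real" and a :: real
  assumes J: "open J" "s \<in> J" and pos: "\<And>t. t \<in> J \<Longrightarrow> 0 < k t"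
    and dk: "\<And>t. t \<in> J \<Longrightarrow> (k has_real_derivative k' t) (at t)"
    and dk': "(k' has_real_derivative k'') (at s)"
  shows "k s powr a * deriv (deriv (\<lambda>t. 1 / k t powr a)) s
    = a * (a + 1) * (k' s)\<^sup>2 / (k s)\<^sup>2 - a * k'' / k s"
proof -
  have inv_powr: "(\<lambda>t. 1 / k t powr a) = (\<lambda>t. k t powr (- a))"
    by (simp add: powr_minus_divide)
  have D1: "- a * (k t powr (- a - 1) * k' t) = deriv (\<lambda>t. k t powr (- a)) t" if "t \<in> J" for t
    using DERIV_fun_powr[OF dk[OF that] pos[OF that], of "- a"] by (simp add: DERIV_imp_deriv)
  have "((\<lambda>t. - a * (k t powr (- a - 1) * k' t)) has_real_derivative
      - a * ((- a - 1) * k s powr (- a - 2) * k' s * k' s + k s powr (- a - 1) * k'')) (at s)"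
    by (rule DERIV_cong[OF DERIV_cmult[OF DERIV_mult[OF
          DERIV_fun_powr[OF dk[OF J(2)] pos[OF J(2)], of "- a - 1"] dk']]])
      (simp add: algebra_simps)
  then have D2: "deriv (deriv (\<lambda>t. k t powr (- a))) s
      = - a * ((- a - 1) * k s powr (- a - 2) * k' s * k' s + k s powr (- a - 1) * k'')"
    by (intro DERIV_imp_deriv has_field_derivative_transform_within_open[OF _ J D1])
  have E1: "k s powr a * k s powr (- a - 1) = 1 / k s"
    and E2: "k s powr a * k s powr (- a - 2) = 1 / (k s)\<^sup>2"
    using pos[OF J(2)] by (simp_all flip: powr_add add: powr_minus_divide)
  have "k s powr a * deriv (deriv (\<lambda>t. k t powr (- a))) s
      = - a * ((- a - 1) * (k' s)\<^sup>2 * (k s powr a * k s powr (- a - 2))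
          + (k s powr a * k s powr (- a - 1)) * k'')"
    unfolding D2 by (simp add: algebra_simps power2_eq_square)
  then show ?thesis
    unfolding inv_powr E1 E2 using pos[OF J(2)] by (simp add: field_simps)
qed

definition first_integral :: "real \<Rightarrow> real \<Rightarrow> real" where
  "first_integral d x = 16/9 * x\<^sup>2 * (16 * d * x powr (3/2) - 9 * x\<^sup>2 - 1)"

text \<open>Half the derivative of first_integral.\<close>
definition accel :: "real \<Rightarrow> real \<Rightarrow> real" where
  "accel d x = 448/9 * d * x powr (5/2) - 32 * x ^ 3 - 16/9 * x"

lemma biconservative_equation_iff_accel:
  fixes k k' :: "real \<Rightarrow> real"
  assumes J: "open J" "s \<in> J" and pos: "\<And>t. t \<in> J \<Longrightarrow> 0 < k t"
    and dk: "\<And>t. t \<in> J \<Longrightarrow> (k has_real_derivative k' t) (at t)"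
    and dk': "(k' has_real_derivative k'') (at s)"
    and energy: "(k' s)\<^sup>2 = first_integral d (k s)"
  shows "k s powr (3/4) * deriv (deriv (\<lambda>t. 1 / k t powr (3/4))) s - 3 * (k s)\<^sup>2 + 1 = 0
    \<longleftrightarrow> k'' = accel d (k s)"
proof -
  define x where "x = k s"
  have "0 < x" unfolding x_def using pos J by simp
  have "x powr (5/2) = x powr (1 + 3/2)"
    by simp
  also have "\<dots> = x * x powr (3/2)"
    using \<open>0 < x\<close> by (simp only: powr_add powr_one less_imp_le)
  finally have powr52: "x powr (5/2) = x * x powr (3/2)" .
  have "k s powr (3/4) * deriv (deriv (\<lambda>t. 1 / k t powr (3/4))) s - 3 * (k s)\<^sup>2 + 1
      = 3/4 * (3/4 + 1) * first_integral d x / x\<^sup>2 - 3/4 * k'' / x - 3 * x\<^sup>2 + 1"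
    using powr_mult_deriv_deriv_inverse_powr[OF J pos dk dk', of "3/4"] energy
    unfolding x_def by simp
  also have "\<dots> = 3/4 * (accel d x - k'') / x"
    unfolding first_integral_def accel_def powr52
    using \<open>0 < x\<close> by (simp add: field_simps power2_eq_square power3_eq_cube)
  finally show ?thesis
    using \<open>0 < x\<close> unfolding x_def by auto
qed

lemma biconservative_sol_deriv_has_derivative:
  assumes sol: "biconservative_sol J k"
    and energy: "\<forall>s\<in>J. (deriv k s)\<^sup>2 = first_integral d (k s)" and "s \<in> J"
  shows "(deriv k has_real_derivative accel d (k s)) (at s)"
proof -
  have J: "open J" and pos: "\<And>t. t \<in> J \<Longrightarrow> 0 < k t"
    and dk: "\<And>t. t \<in> J \<Longrightarrow> (k has_real_derivative deriv k t) (at t)"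
    and dk': "(deriv k has_real_derivative deriv (deriv k) s) (at s)"
    using sol \<open>s \<in> J\<close> unfolding biconservative_sol_def
    by (auto simp: DERIV_deriv_iff_real_differentiable)
  have "deriv (deriv k) s = accel d (k s)"
    using biconservative_equation_iff_accel[OF J \<open>s \<in> J\<close> pos dk dk'] energy sol \<open>s \<in> J\<close>
    unfolding biconservative_sol_def by auto
  then show ?thesis using dk' by simp
qed

lemma accel_lipschitz:
  assumes "0 < a"
  obtains L where "L-lipschitz_on {a..b} (accel d)"
proof (rule lipschitz_on_interval_if_continuous_derivative)
  fix x assume "x \<in> {a..b}"
  then have "0 < x" using assms by simp
  have "((\<lambda>x. 448/9 * d * x powr (5/2) - 32 * x ^ 3 - 16/9 * x) has_real_derivative
      448/9 * d * (5/2 * x powr (5/2 - 1)) - 32 * (3 * x\<^sup>2) - 16/9 * 1) (at x)"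
    using has_real_derivative_powr[OF \<open>0 < x\<close>, of "5/2"] DERIV_pow[of 3 x]
    by (intro DERIV_diff DERIV_cmult DERIV_ident) simp_all
  then show "(accel d has_real_derivative
      448/9 * d * (5/2 * x powr (3/2)) - 32 * (3 * x\<^sup>2) - 16/9) (at x)"
    unfolding accel_def[abs_def] by simp
next
  show "continuous_on {a..b} (\<lambda>x. 448/9 * d * (5/2 * x powr (3/2)) - 32 * (3 * x\<^sup>2) - 16/9)"
    using assms by (intro continuous_intros) auto
qed

section \<open>The quartic\<close>

definition quartic :: "real \<Rightarrow> real \<Rightarrow> real" where
  "quartic d y = 16 * d * y ^ 3 - 9 * y ^ 4 - 1"

lemma square_powr_half:
  fixes y :: real
  assumes "0 < y"
  shows "(y\<^sup>2) powr (r / 2) = y powr r"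
proof -
  have "y\<^sup>2 = y powr 2" using assms by (simp add: powr_realpow)
  then show ?thesis by (simp add: powr_powr)
qed

lemma
  fixes y :: real
  assumes "0 < y"
  shows first_integral_square: "first_integral d (y\<^sup>2) = 16/9 * y ^ 4 * quartic d y"
    and accel_square: "accel d (y\<^sup>2) = 448/9 * d * y ^ 5 - 32 * y ^ 6 - 16/9 * y\<^sup>2"
proof -
  have "(y\<^sup>2) powr (3/2) = y ^ 3" "(y\<^sup>2) powr (5/2) = y ^ 5"
    using square_powr_half[OF assms, of 3] square_powr_half[OF assms, of 5] assms
    by (simp_all add: powr_realpow)
  then show "first_integral d (y\<^sup>2) = 16/9 * y ^ 4 * quartic d y"
    and "accel d (y\<^sup>2) = 448/9 * d * y ^ 5 - 32 * y ^ 6 - 16/9 * y\<^sup>2"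
    by (simp_all add: first_integral_def accel_def quartic_def algebra_simps flip: power_mult)
qed

lemma quartic_has_derivative:
  "(quartic d has_real_derivative 12 * y\<^sup>2 * (4 * d - 3 * y)) (at y)"
  unfolding quartic_def[abs_def]
  by (rule derivative_eq_intros refl | simp add: algebra_simps power2_eq_square power3_eq_cube)+

lemma continuous_on_quartic: "continuous_on S (quartic d)"
  unfolding quartic_def[abs_def] by (intro continuous_intros)

lemma quartic_strict_mono:
  assumes "0 \<le> u" "u < v" "v \<le> 4 * d / 3"
  shows "quartic d u < quartic d v"
proof (rule DERIV_pos_imp_increasing_open[OF \<open>u < v\<close> _ continuous_on_quartic])
  fix y assume "u < y" "y < v"
  then show "\<exists>D. (quartic d has_real_derivative D) (at y) \<and> 0 < D"
    using assms quartic_has_derivative by (intro exI conjI) auto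
qed

lemma quartic_strict_antimono:
  assumes "0 < d" "4 * d / 3 \<le> u" "u < v"
  shows "quartic d v < quartic d u"
proof (rule DERIV_neg_imp_decreasing_open[OF \<open>u < v\<close> _ continuous_on_quartic])
  fix y assume "u < y" "y < v"
  then show "\<exists>D. (quartic d has_real_derivative D) (at y) \<and> D < 0"
    using assms quartic_has_derivative by (intro exI conjI) (auto simp: mult_pos_neg)
qed

locale quartic_roots =
  fixes d y1 y2 :: real
  assumes y1_pos: "0 < y1"
    and y1_less: "y1 < 4 * d / 3" and y2_greater: "4 * d / 3 < y2"
    and quartic_y1: "quartic d y1 = 0" and quartic_y2: "quartic d y2 = 0"
begin

lemma d_pos: "0 < d"
  using y1_pos y1_less by simp

lemma y1_less_y2: "y1 < y2"
  using y1_less y2_greater by simp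

lemma quartic_pos_between:
  assumes "y1 < y" "y < y2"
  shows "0 < quartic d y"
proof (cases "y \<le> 4 * d / 3")
  case True
  then show ?thesis using quartic_strict_mono[OF _ assms(1) True] y1_pos quartic_y1 by simp
next
  case False
  then show ?thesis using quartic_strict_antimono[OF d_pos _ assms(2)] quartic_y2 by simp
qed

lemma between_if_quartic_nonneg:
  assumes "0 < y" "0 \<le> quartic d y"
  shows "y1 \<le> y" "y \<le> y2"
proof -
  show "y1 \<le> y"
    using quartic_strict_mono[OF _ _ less_imp_le[OF y1_less], of y] assms quartic_y1 by force
  show "y \<le> y2"
    using quartic_strict_antimono[OF d_pos less_imp_le[OF y2_greater], of y] assms quartic_y2 by force
qed

definition cofactor_coeff :: real where
  "cofactor_coeff = 16 * d - 9 * (y1 + y2)"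

definition cofactor :: "real \<Rightarrow> real" where
  "cofactor y = 9 * y\<^sup>2 - cofactor_coeff * y - (cofactor_coeff * (y1 + y2) + 9 * y1 * y2)"

lemma quartic_factor: "quartic d y = (y - y1) * (y2 - y) * cofactor y"
proof -
  define c1 c0 where "c1 = (cofactor_coeff * (y1 + y2) + 9 * y1 * y2) * (y1 + y2) - cofactor_coeff * y1 * y2"
    and "c0 = 1 + (cofactor_coeff * (y1 + y2) + 9 * y1 * y2) * y1 * y2"
  have division: "quartic d y = (y - y1) * (y2 - y) * cofactor y + c1 * y - c0" for y
    unfolding quartic_def cofactor_def c1_def c0_def cofactor_coeff_def
    by (simp add: algebra_simps power2_eq_square power3_eq_cube power4_eq_xxxx)
  have "c1 * y1 - c0 = 0" "c1 * y2 - c0 = 0"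
    using division[of y1] division[of y2] quartic_y1 quartic_y2 by simp_all
  then have "c1 * (y2 - y1) = 0" by (simp add: algebra_simps)
  then have "c1 = 0" "c0 = 0"
    using y1_less_y2 \<open>c1 * y1 - c0 = 0\<close> by simp_all
  then show ?thesis using division[of y] by simp
qed

lemma quartic_derivative_factor:
  "(y1 + y2 - 2 * y) * cofactor y + (y - y1) * (y2 - y) * (18 * y - cofactor_coeff)
    = 12 * y\<^sup>2 * (4 * d - 3 * y)"
proof -
  have "((\<lambda>y. (y - y1) * (y2 - y) * cofactor y) has_real_derivative
      (y1 + y2 - 2 * y) * cofactor y + (y - y1) * (y2 - y) * (18 * y - cofactor_coeff)) (at y)"
    unfolding cofactor_def
    by (rule derivative_eq_intros refl | simp add: algebra_simps power2_eq_square)+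
  moreover have "quartic d = (\<lambda>y. (y - y1) * (y2 - y) * cofactor y)"
    using quartic_factor by (rule ext)
  ultimately show ?thesis
    using quartic_has_derivative[of d y] DERIV_unique by metis
qed

lemma cofactor_pos:
  assumes "y1 \<le> y" "y \<le> y2"
  shows "0 < cofactor y"
proof -
  consider "y = y1" | "y = y2" | "y1 < y \<and> y < y2" using assms by linarith
  then show ?thesis
  proof cases
    case 1
    have "(y2 - y1) * cofactor y1 = 12 * y1\<^sup>2 * (4 * d - 3 * y1)"
      using quartic_derivative_factor[of y1] by simp
    also have "\<dots> > 0" using y1_pos y1_less by simp
    finally show ?thesis using 1 y1_less_y2 by (simp add: zero_less_mult_iff)
  next
    case 2
    have "(y2 - y1) * cofactor y2 = 12 * y2\<^sup>2 * (3 * y2 - 4 * d)"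
      using quartic_derivative_factor[of y2] by (simp add: algebra_simps)
    also have "\<dots> > 0" using y2_greater y1_pos y1_less by simp
    finally show ?thesis using 2 y1_less_y2 by (simp add: zero_less_mult_iff)
  next
    case 3
    then have "0 < (y - y1) * (y2 - y) * cofactor y" "0 < (y - y1) * (y2 - y)"
      using quartic_pos_between[of y] quartic_factor[of y] by simp_all
    then show ?thesis by (simp add: zero_less_mult_iff)
  qed
qed

lemma first_integral_nonneg_imp_bounds:
  assumes "0 < x" "0 \<le> first_integral d x"
  shows "y1\<^sup>2 \<le> x" "x \<le> y2\<^sup>2"
proof -
  have "0 \<le> (sqrt x) ^ 4 * quartic d (sqrt x)"
    using assms first_integral_square[of "sqrt x" d] by simp
  moreover have "0 < (sqrt x) ^ 4"
    using assms by simp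
  ultimately have "0 \<le> quartic d (sqrt x)"
    by (simp add: zero_le_mult_iff)
  then have "y1 \<le> sqrt x" "sqrt x \<le> y2"
    using between_if_quartic_nonneg assms by simp_all
  then have "y1\<^sup>2 \<le> (sqrt x)\<^sup>2" "(sqrt x)\<^sup>2 \<le> y2\<^sup>2"
    using y1_pos assms by (simp_all only: power_mono less_imp_le real_sqrt_ge_zero)
  then show "y1\<^sup>2 \<le> x" "x \<le> y2\<^sup>2"
    using assms by simp_all
qed

section \<open>The periodic solutions\<close>

definition mid :: real where "mid = (y1 + y2) / 2"
definition rad :: real where "rad = (y2 - y1) / 2"

definition y_phase :: "real \<Rightarrow> real" where
  "y_phase \<theta> = mid - rad * cos \<theta>"

definition cofactor_root :: "real \<Rightarrow> real" where
  "cofactor_root \<theta> = sqrt (cofactor (y_phase \<theta>))"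

text \<open>With sqrt k = y_phase \<theta>, the first integral k_s^2 = first_integral d k becomes
  \<theta>_s^2 = omega \<theta>^2, by quartic_factor and y_phase_product.\<close>
definition omega :: "real \<Rightarrow> real" where
  "omega \<theta> = 2/3 * y_phase \<theta> * cofactor_root \<theta>"

definition dkappa :: "real \<Rightarrow> real" where
  "dkappa \<theta> = 4/3 * rad * (y_phase \<theta>)\<^sup>2 * cofactor_root \<theta> * sin \<theta>"

lemma rad_pos: "0 < rad"
  unfolding rad_def using y1_less_y2 by simp

lemma y_phase_bounds: "y1 \<le> y_phase \<theta>" "y_phase \<theta> \<le> y2"
proof -
  have "\<bar>rad * cos \<theta>\<bar> \<le> rad"
    using rad_pos abs_cos_le_one[of \<theta>] by (simp add: abs_mult mult_left_le)
  then show "y1 \<le> y_phase \<theta>" "y_phase \<theta> \<le> y2"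
    unfolding y_phase_def mid_def rad_def by (simp_all add: abs_le_iff field_simps)
qed

lemma y_phase_pos: "0 < y_phase \<theta>"
  using y_phase_bounds(1)[of \<theta>] y1_pos by simp

lemma cofactor_root_pos: "0 < cofactor_root \<theta>"
  unfolding cofactor_root_def using cofactor_pos y_phase_bounds by simp

lemma cofactor_root_sq: "(cofactor_root \<theta>)\<^sup>2 = cofactor (y_phase \<theta>)"
  unfolding cofactor_root_def using cofactor_pos[OF y_phase_bounds] by (simp add: less_imp_le)

lemma omega_pos: "0 < omega \<theta>"
  unfolding omega_def using y_phase_pos cofactor_root_pos by simp

lemma omega_periodic: "omega (\<theta> + 2 * pi) = omega \<theta>"
  unfolding omega_def cofactor_root_def y_phase_def by simp

lemma y_phase_product: "(y_phase \<theta> - y1) * (y2 - y_phase \<theta>) = rad\<^sup>2 * (sin \<theta>)\<^sup>2"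
proof -
  have lower: "y_phase \<theta> - y1 = rad * (1 - cos \<theta>)"
    and upper: "y2 - y_phase \<theta> = rad * (1 + cos \<theta>)"
    unfolding y_phase_def mid_def rad_def by (simp_all add: field_simps)
  have "(y_phase \<theta> - y1) * (y2 - y_phase \<theta>) = rad\<^sup>2 * (1 - (cos \<theta>)\<^sup>2)"
    unfolding lower upper by (simp add: algebra_simps power2_eq_square)
  then show ?thesis by (simp add: sin_squared_eq)
qed

lemma y_phase_has_derivative: "(y_phase has_real_derivative rad * sin \<theta>) (at \<theta>)"
  unfolding y_phase_def[abs_def] by (rule derivative_eq_intros refl | simp)+

lemma cofactor_root_has_derivative:
  "(cofactor_root has_real_derivative
    (18 * y_phase \<theta> - cofactor_coeff) * (rad * sin \<theta>) / (2 * cofactor_root \<theta>)) (at \<theta>)"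
proof -
  have "((\<lambda>\<theta>. cofactor (y_phase \<theta>)) has_real_derivative
      (18 * y_phase \<theta> - cofactor_coeff) * (rad * sin \<theta>)) (at \<theta>)"
    unfolding cofactor_def
    by (rule derivative_eq_intros y_phase_has_derivative refl | simp add: algebra_simps)+
  from DERIV_chain2[OF DERIV_real_sqrt[OF cofactor_pos[OF y_phase_bounds]] this]
  show ?thesis unfolding cofactor_root_def[abs_def] by (simp add: field_simps)
qed

lemma continuous_on_omega: "continuous_on UNIV omega"
proof -
  have "isCont omega \<theta>" for \<theta>
    unfolding omega_def[abs_def]
    by (intro continuous_intros DERIV_isCont[OF y_phase_has_derivative]
        DERIV_isCont[OF cofactor_root_has_derivative])
  then show ?thesis by (simp add: continuous_at_imp_continuous_on)
qed

lemma dkappa_sq: "(dkappa \<theta>)\<^sup>2 = first_integral d ((y_phase \<theta>)\<^sup>2)"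
proof -
  have "(dkappa \<theta>)\<^sup>2
      = 16/9 * (y_phase \<theta>)^4 * (rad\<^sup>2 * (sin \<theta>)\<^sup>2 * (cofactor_root \<theta>)\<^sup>2)"
    unfolding dkappa_def by (simp add: power_mult_distrib power2_eq_square power4_eq_xxxx)
  also have "\<dots> = first_integral d ((y_phase \<theta>)\<^sup>2)"
    unfolding first_integral_square[OF y_phase_pos] cofactor_root_sq quartic_factor
      y_phase_product[symmetric] ..
  finally show ?thesis .
qed

lemma dkappa_has_derivative:
  "(dkappa has_real_derivative accel d ((y_phase \<theta>)\<^sup>2) / omega \<theta>) (at \<theta>)"
proof -
  define y S s c
    where "y = y_phase \<theta>" and "S = cofactor_root \<theta>" and "s = sin \<theta>" and "c = cos \<theta>"
  define D where "D = 4/3 * rad * (2 * y * (rad * s) * S * s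
    + y\<^sup>2 * ((18 * y - cofactor_coeff) * (rad * s) / (2 * S)) * s + y\<^sup>2 * S * c)"
  have "(dkappa has_real_derivative D) (at \<theta>)"
    unfolding dkappa_def[abs_def] D_def y_def S_def s_def c_def
    by (rule derivative_eq_intros y_phase_has_derivative cofactor_root_has_derivative refl
        | simp add: algebra_simps)+
  moreover have "D * omega \<theta> = accel d ((y_phase \<theta>)\<^sup>2)"
  proof -
    have "0 < S" unfolding S_def by (rule cofactor_root_pos)
    have P: "rad\<^sup>2 * s\<^sup>2 = (y - y1) * (y2 - y)"
      unfolding s_def y_def by (rule y_phase_product[symmetric])
    have C: "rad * c = (y1 + y2 - 2 * y) / 2"
      unfolding c_def y_def y_phase_def mid_def by (simp add: field_simps)
    have "D * omega \<theta> = 8/9 * y * (2 * y * (rad\<^sup>2 * s\<^sup>2) * S\<^sup>2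
        + y\<^sup>2 / 2 * ((18 * y - cofactor_coeff) * (rad\<^sup>2 * s\<^sup>2) + 2 * S\<^sup>2 * (rad * c)))"
      unfolding D_def omega_def y_def[symmetric] S_def[symmetric]
      using \<open>0 < S\<close> by (simp add: field_simps power2_eq_square)
    also have "\<dots> = 8/9 * y * (2 * y * quartic d y + y\<^sup>2 / 2 * (12 * y\<^sup>2 * (4 * d - 3 * y)))"
      unfolding P C S_def cofactor_root_sq y_def[symmetric] quartic_factor
        quartic_derivative_factor[symmetric] by (simp add: field_simps)
    also have "\<dots> = accel d ((y_phase \<theta>)\<^sup>2)"
      using accel_square[OF y_phase_pos[of \<theta>], of d] unfolding y_def[symmetric]
      by (simp add: quartic_def algebra_simps power2_eq_square power3_eq_cube
          power4_eq_xxxx power_numeral_reduce)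
    finally show ?thesis .
  qed
  ultimately show ?thesis
    using omega_pos[of \<theta>] by (metis nonzero_mult_div_cancel_right order_less_irrefl)
qed

lemma dkappa_nonneg: "0 \<le> sin \<theta> \<Longrightarrow> 0 \<le> dkappa \<theta>"
  and dkappa_nonpos: "sin \<theta> \<le> 0 \<Longrightarrow> dkappa \<theta> \<le> 0"
  unfolding dkappa_def using rad_pos cofactor_root_pos[of \<theta>]
  by (simp_all add: mult_nonneg_nonpos)

lemma exists_phase:
  assumes "y1 \<le> y" "y \<le> y2" and v: "v\<^sup>2 = first_integral d (y\<^sup>2)"
  obtains \<theta> where "y_phase \<theta> = y" "dkappa \<theta> = v"
proof -
  define c where "c = (mid - y) / rad"
  have c: "-1 \<le> c" "c \<le> 1"
    using assms rad_pos unfolding c_def mid_def rad_def by (auto simp: field_simps)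
  define \<theta> where "\<theta> = (if 0 \<le> v then arccos c else - arccos c)"
  have "cos \<theta> = c" unfolding \<theta>_def using c by simp
  then have y: "y_phase \<theta> = y"
    unfolding y_phase_def c_def using rad_pos by simp
  have "0 \<le> sin (arccos c)"
    using c by (simp add: sin_ge_zero arccos_bounded)
  then have "0 \<le> v \<Longrightarrow> 0 \<le> dkappa \<theta>" "v < 0 \<Longrightarrow> dkappa \<theta> \<le> 0"
    unfolding \<theta>_def by (auto intro: dkappa_nonneg dkappa_nonpos)
  moreover have "(dkappa \<theta>)\<^sup>2 = v\<^sup>2"
    unfolding dkappa_sq y v ..
  then have "dkappa \<theta> = v \<or> dkappa \<theta> = - v"
    by (simp add: power2_eq_iff)
  ultimately have "dkappa \<theta> = v"
    by linarith
  with y show ?thesis by (rule that)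
qed

end

lemma quartic_roots_exist:
  assumes "d > d_star"
  obtains y1 y2 where "quartic_roots d y1 y2"
proof -
  have root: "root 4 27 < 4 * d" "0 < root 4 27"
    using assms unfolding d_star_def by simp_all
  then have "0 < d" by linarith
  have "(root 4 27) ^ 4 < (4 * d) ^ 4"
    using root by (intro power_strict_mono) auto
  then have "27 < (4 * d) ^ 4" by simp
  have top: "0 < quartic d (4 * d / 3)"
    using \<open>27 < (4 * d) ^ 4\<close> by (simp add: quartic_def field_simps power_numeral_reduce)
  obtain y1 where y1: "0 \<le> y1" "y1 \<le> 4 * d / 3" "quartic d y1 = 0"
    using IVT'[of "quartic d" 0 0 "4 * d / 3"] top \<open>0 < d\<close> continuous_on_quartic
    by (force simp: quartic_def)
  obtain y2 where y2: "4 * d / 3 \<le> y2" "y2 \<le> 2 * d" "quartic d y2 = 0"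
    using IVT2'[of "quartic d" "2 * d" 0 "4 * d / 3"] top \<open>0 < d\<close> continuous_on_quartic
    by (force simp: quartic_def field_simps power_numeral_reduce)
  have "y1 \<noteq> 4 * d / 3" "y2 \<noteq> 4 * d / 3"
    using top y1(3) y2(3) by (metis less_irrefl)+
  moreover have "y1 \<noteq> 0"
    using y1(3) by (auto simp: quartic_def)
  ultimately have "0 < y1" "y1 < 4 * d / 3" "4 * d / 3 < y2"
    using y1 y2 by (simp_all add: order.strict_iff_order)
  then show ?thesis
    using y1(3) y2(3) by (intro that quartic_roots.intro)
qed

locale periodic_solution = quartic_roots +
  fixes \<phi> :: "real \<Rightarrow> real" and T :: real
  assumes phase_flow: "\<And>t. (\<phi> has_real_derivative omega (\<phi> t)) (at t)"
    and phase_shift: "\<And>t. \<phi> (t + T) = \<phi> t + 2 * pi" and period_pos: "0 < T"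
begin

definition kappa :: "real \<Rightarrow> real" where
  "kappa t = (y_phase (\<phi> t))\<^sup>2"

lemma kappa_pos: "0 < kappa t"
  unfolding kappa_def using y_phase_pos[of "\<phi> t"] by simp

lemma kappa_bounds: "kappa t \<in> {y1\<^sup>2..y2\<^sup>2}"
  unfolding kappa_def using y_phase_bounds[of "\<phi> t"] y1_pos by (auto intro: power_mono)

lemma kappa_periodic: "kappa (t + T) = kappa t"
  unfolding kappa_def phase_shift y_phase_def by simp

lemma kappa_first_integral: "(dkappa (\<phi> t))\<^sup>2 = first_integral d (kappa t)"
  unfolding kappa_def by (rule dkappa_sq)

lemma kappa_has_derivative: "(kappa has_real_derivative dkappa (\<phi> t)) (at t)"
proof -
  have "(kappa has_real_derivative 2 * y_phase (\<phi> t) * (rad * sin (\<phi> t) * omega (\<phi> t))) (at t)"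
    unfolding kappa_def[abs_def]
    by (rule derivative_eq_intros DERIV_chain2[OF y_phase_has_derivative phase_flow] refl | simp)+
  then show ?thesis
    unfolding omega_def dkappa_def by (simp add: power2_eq_square mult_ac)
qed

lemma dkappa_has_derivative_along_flow:
  "((\<lambda>t. dkappa (\<phi> t)) has_real_derivative accel d (kappa t)) (at t)"
  using DERIV_chain2[OF dkappa_has_derivative phase_flow, of t] omega_pos[of "\<phi> t"]
  unfolding kappa_def by simp

lemma biconservative_sol_kappa: "biconservative_sol UNIV kappa"
  unfolding biconservative_sol_def
proof (intro conjI ballI)
  fix s :: real
  have deriv_kappa: "deriv kappa = (\<lambda>t. dkappa (\<phi> t))"
    using kappa_has_derivative DERIV_imp_deriv by blast
  show "0 < kappa s" by (rule kappa_pos)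
  show "kappa differentiable (at s)"
    using kappa_has_derivative real_differentiable_def by blast
  show "deriv kappa differentiable (at s)"
    unfolding deriv_kappa using dkappa_has_derivative_along_flow real_differentiable_def by blast
  show "kappa s powr (3/4) * deriv (deriv (\<lambda>t. 1 / kappa t powr (3/4))) s - 3 * (kappa s)\<^sup>2 + 1 = 0"
    using biconservative_equation_iff_accel[OF open_UNIV UNIV_I kappa_pos kappa_has_derivative
        dkappa_has_derivative_along_flow kappa_first_integral]
    by simp
qed auto

lemma biconservative_sol_eq_kappa:
  assumes sol: "biconservative_sol J k"
    and energy: "\<forall>s\<in>J. (deriv k s)\<^sup>2 = first_integral d (k s)"
    and init: "s0 \<in> J" "k s0 = kappa s0" "deriv k s0 = dkappa (\<phi> s0)" and "s \<in> J"
  shows "k s = kappa s"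
proof -
  have J: "is_interval J" and pos: "\<And>t. t \<in> J \<Longrightarrow> 0 < k t"
    and dk: "\<And>t. t \<in> J \<Longrightarrow> (k has_real_derivative deriv k t) (at t)"
    using sol unfolding biconservative_sol_def by (auto simp: DERIV_deriv_iff_real_differentiable)
  have "k ` J \<subseteq> {y1\<^sup>2..y2\<^sup>2}"
  proof (rule image_subsetI)
    fix t assume "t \<in> J"
    then show "k t \<in> {y1\<^sup>2..y2\<^sup>2}"
      using first_integral_nonneg_imp_bounds[OF pos[OF \<open>t \<in> J\<close>]] energy
      by (metis atLeastAtMost_iff zero_le_power2)
  qed
  moreover obtain L where "L-lipschitz_on {y1\<^sup>2..y2\<^sup>2} (accel d)"
    using accel_lipschitz y1_pos by (metis zero_less_power)
  ultimately show ?thesis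
    using autonomous_second_order_ode_unique[OF J init(1) \<open>s \<in> J\<close> dk
        biconservative_sol_deriv_has_derivative[OF sol energy] kappa_has_derivative
        dkappa_has_derivative_along_flow] kappa_bounds init(2,3)
    by blast
qed

end

lemma (in quartic_roots) periodic_solution_through:
  assumes "0 < x" and v: "v\<^sup>2 = first_integral d x"
  obtains \<phi> T where "periodic_solution d y1 y2 \<phi> T" "(y_phase (\<phi> t0))\<^sup>2 = x" "dkappa (\<phi> t0) = v"
proof -
  have "y1\<^sup>2 \<le> x" "x \<le> y2\<^sup>2"
    using first_integral_nonneg_imp_bounds[OF \<open>0 < x\<close>] v by (metis zero_le_power2)+
  then have "y1 \<le> sqrt x" "sqrt x \<le> y2"
    using real_sqrt_le_mono[of x "y2\<^sup>2"] y1_pos y1_less_y2 by (auto intro: real_le_rsqrt)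
  moreover have "v\<^sup>2 = first_integral d ((sqrt x)\<^sup>2)"
    using \<open>0 < x\<close> v by simp
  ultimately obtain \<theta>0 where \<theta>0: "y_phase \<theta>0 = sqrt x" "dkappa \<theta>0 = v"
    by (rule exists_phase)
  obtain \<phi> T where "0 < T" "\<phi> t0 = \<theta>0" "\<And>t. (\<phi> has_real_derivative omega (\<phi> t)) (at t)"
    "\<And>t. \<phi> (t + T) = \<phi> t + 2 * pi"
    by (rule periodic_autonomous_ode_flow[of omega "2 * pi" t0 \<theta>0])
      (auto simp: continuous_on_omega omega_pos omega_periodic)
  then have "periodic_solution d y1 y2 \<phi> T"
    by unfold_locales
  then show ?thesis
    using that \<theta>0 \<open>\<phi> t0 = \<theta>0\<close> \<open>0 < x\<close> by simp
qed

theorem mainTheorem6: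
  fixes d :: real and k :: "real \<Rightarrow> real" and I :: "real set"
  assumes "d > d_star"
    and "maximal_sol I k"
    and "\<exists>s\<in>I. \<exists>t\<in>I. k s \<noteq> k t"
    and "\<forall>s\<in>I. (deriv k s)\<^sup>2 =
            16/9 * (k s)\<^sup>2 * (16 * d * k s powr (3/2) - 9 * (k s)\<^sup>2 - 1)"
  shows "I = UNIV \<and> (\<exists>T>0. \<forall>s. k (s + T) = k s)"
proof -
  obtain y1 y2 where "quartic_roots d y1 y2"
    using quartic_roots_exist[OF assms(1)] .
  then interpret quartic_roots d y1 y2 .
  have sol: "biconservative_sol I k"
    using assms(2) unfolding maximal_sol_def by simp
  have energy: "\<forall>s\<in>I. (deriv k s)\<^sup>2 = first_integral d (k s)"
    using assms(4) by (simp add: first_integral_def)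
  obtain s0 where "s0 \<in> I" "0 < k s0"
    using sol unfolding biconservative_sol_def by auto
  then obtain \<phi> T where per: "periodic_solution d y1 y2 \<phi> T"
    and init: "(y_phase (\<phi> s0))\<^sup>2 = k s0" "dkappa (\<phi> s0) = deriv k s0"
    using periodic_solution_through energy by metis
  interpret periodic_solution d y1 y2 \<phi> T
    by (fact per)
  have k_eq: "\<forall>s\<in>I. k s = kappa s"
    using biconservative_sol_eq_kappa[OF sol energy \<open>s0 \<in> I\<close>] init unfolding kappa_def by simp
  have maximal:
    "\<And>J g. I \<subseteq> J \<Longrightarrow> biconservative_sol J g \<Longrightarrow> \<forall>s\<in>I. g s = k s \<Longrightarrow> J = I"
    using assms(2) unfolding maximal_sol_def by blast
  have "I = UNIV"
    using maximal[OF subset_UNIV biconservative_sol_kappa] k_eq by simp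
  then show ?thesis
    using k_eq kappa_periodic period_pos by auto
qed

end
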